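(* The consequence relation $ss \cap tt$ has a unique truth-functional binary connective $\to$ satisfying the single-conclusion version of the conclusion-Gentzen regularity rule (i.e.\ the deduction theorem): for all sets of formulae $\Gamma$ and formulae $A,B$, $\Gamma \vdash A \to B$ iff $\Gamma, A\vdash B$. It is the connective whose truth-function is given by $x \to y = 1$ if $x \leq y$, and $x \to y = y$ otherwise; that is, $1\to 1 = 1$, $1\to \tfrac{1}{2} = \tfrac{1}{2}$, $1 \to 0 = 0$, $\tfrac{1}{2}\to 1 = 1$, $\tfrac{1}{2}\to\tfrac{1}{2} = 1$, $\tfrac{1}{2}\to 0 = 0$, and $0 \to y = 1$ for every $y$ (a three-valued Gödel implication). However, $ss \cap tt$ has no truth-functional connective $\to$ satisfying the single-conclusion version of the premise-Gentzen regularity rule: for all $\Gamma, A, B$, $\Gamma, A\to B\vdash$ (empty conclusion) iff ($\Gamma, B \vdash$ and $\Gamma \vdash A$). The Gödel conditional just defined does, however, satisfy the right-to-left direction of that premise rule: if $\Gamma, B \vdash$ and $\Gamma \vdash A$, then $\Gamma, A\to B\vdash$.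
   Context: Three-valued truth-functional semantics with truth values $\{0, \tfrac{1}{2}, 1\}$ ordered $0 < \tfrac{1}{2} < 1$, over a sentential language whose semantics is constant expressive (for each truth value there is a formula taking that value under every valuation), and where consequence relates sets of premises to sets of conclusions (possibly empty). The relation $ss \cap tt$ is the intersection of the pure consequence relation $ss$ (preservation of the value $1$: whenever all premises take value $1$, some conclusion takes value $1$) and the pure consequence relation $tt$ (preservation of non-zero values: whenever all premises take a value in $\{1,\tfrac{1}{2}\}$, some conclusion does). Equivalently, $\Gamma \vdash \Delta$ iff for every valuation $v$: some premise value is $\leq$ some conclusion value, or some premise has value $0$, or some conclusion has value $1$. *)

theory Defs
  imports Main
begin

datatype tv = Zero | Half | One

fun tv_rank :: "tv \<Rightarrow> nat" where
  "tv_rank Zero = 0" | "tv_rank Half = 1" | "tv_rank One = 2"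

definition tv_le :: "tv \<Rightarrow> tv \<Rightarrow> bool" where
  "tv_le x y \<longleftrightarrow> tv_rank x \<le> tv_rank y"

text \<open>Formulas: atoms, a constant for each truth value (constant expressiveness),
  the binary connective under study, and arbitrary further connectives.\<close>
datatype 'c form = Var nat | Const tv | Imp "'c form" "'c form" | Op 'c "'c form list"

fun eval :: "('c \<Rightarrow> tv list \<Rightarrow> tv) \<Rightarrow> (tv \<Rightarrow> tv \<Rightarrow> tv) \<Rightarrow> (nat \<Rightarrow> tv) \<Rightarrow> 'c form \<Rightarrow> tv" where
  "eval I f v (Var n) = v n"
| "eval I f v (Const c) = c"
| "eval I f v (Imp A B) = f (eval I f v A) (eval I f v B)"
| "eval I f v (Op c As) = I c (map (eval I f v) As)"

definition ss :: "('c \<Rightarrow> tv list \<Rightarrow> tv) \<Rightarrow> (tv \<Rightarrow> tv \<Rightarrow> tv) \<Rightarrow> 'c form set \<Rightarrow> 'c form set \<Rightarrow> bool" where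
  "ss I f \<Gamma> \<Delta> \<longleftrightarrow> (\<forall>v. (\<forall>G\<in>\<Gamma>. eval I f v G = One) \<longrightarrow> (\<exists>D\<in>\<Delta>. eval I f v D = One))"

definition tt :: "('c \<Rightarrow> tv list \<Rightarrow> tv) \<Rightarrow> (tv \<Rightarrow> tv \<Rightarrow> tv) \<Rightarrow> 'c form set \<Rightarrow> 'c form set \<Rightarrow> bool" where
  "tt I f \<Gamma> \<Delta> \<longleftrightarrow> (\<forall>v. (\<forall>G\<in>\<Gamma>. eval I f v G \<noteq> Zero) \<longrightarrow> (\<exists>D\<in>\<Delta>. eval I f v D \<noteq> Zero))"

definition sstt :: "('c \<Rightarrow> tv list \<Rightarrow> tv) \<Rightarrow> (tv \<Rightarrow> tv \<Rightarrow> tv) \<Rightarrow> 'c form set \<Rightarrow> 'c form set \<Rightarrow> bool" where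
  "sstt I f \<Gamma> \<Delta> \<longleftrightarrow> ss I f \<Gamma> \<Delta> \<and> tt I f \<Gamma> \<Delta>"

definition godel :: "tv \<Rightarrow> tv \<Rightarrow> tv" where
  "godel x y = (if tv_le x y then One else y)"

definition deduction_rule :: "('c \<Rightarrow> tv list \<Rightarrow> tv) \<Rightarrow> (tv \<Rightarrow> tv \<Rightarrow> tv) \<Rightarrow> bool" where
  "deduction_rule I f \<longleftrightarrow>
     (\<forall>\<Gamma> A B. sstt I f \<Gamma> {Imp A B} \<longleftrightarrow> sstt I f (insert A \<Gamma>) {B})"

definition premise_rule :: "('c \<Rightarrow> tv list \<Rightarrow> tv) \<Rightarrow> (tv \<Rightarrow> tv \<Rightarrow> tv) \<Rightarrow> bool" where
  "premise_rule I f \<longleftrightarrow>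
     (\<forall>\<Gamma> A B. sstt I f (insert (Imp A B) \<Gamma>) {} \<longleftrightarrow>
                (sstt I f (insert B \<Gamma>) {} \<and> sstt I f \<Gamma> {A}))"

definition premise_rule_rtl :: "('c \<Rightarrow> tv list \<Rightarrow> tv) \<Rightarrow> (tv \<Rightarrow> tv \<Rightarrow> tv) \<Rightarrow> bool" where
  "premise_rule_rtl I f \<longleftrightarrow>
     (\<forall>\<Gamma> A B. sstt I f (insert B \<Gamma>) {} \<and> sstt I f \<Gamma> {A} \<longrightarrow>
                sstt I f (insert (Imp A B) \<Gamma>) {})"

end

theory Submission
  imports Defs
begin

text \<open>For a single conclusion
  the two pointwise conditions of \<open>ss \<inter> tt\<close> are exactly residuated by the Goedel
  conditional, which gives the deduction theorem; conversely, instantiating the deduction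
  theorem with constant formulas (and with the extra premise \<open>1/2\<close>) pins down, for
  every pair of arguments, whether \<open>x \<rightarrow> y\<close> is \<open>1\<close> and whether it is \<open>0\<close>,
  which leaves no choice for the truth function. For the premise rule, the formulas
  \<open>1/2 \<rightarrow> 0\<close> with and without the extra premise \<open>1/2\<close> demand
  \<open>1/2 \<rightarrow> 0 \<noteq> 0\<close> and \<open>1/2 \<rightarrow> 0 = 0\<close> respectively.\<close>

lemma tv_eqI: "(x = One \<longleftrightarrow> y = One) \<Longrightarrow> (x = Zero \<longleftrightarrow> y = Zero) \<Longrightarrow> x = y"
  by (cases x; cases y) auto

lemma sstt_empty_iff: "sstt I f \<Gamma> {} \<longleftrightarrow> (\<forall>v. \<exists>G\<in>\<Gamma>. eval I f v G = Zero)"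
  unfolding sstt_def ss_def tt_def by simp (metis tv.distinct(4))

lemma sstt_singleton_iff:
  "sstt I f \<Gamma> {D} \<longleftrightarrow>
     (\<forall>v. ((\<forall>G\<in>\<Gamma>. eval I f v G = One) \<longrightarrow> eval I f v D = One)
        \<and> ((\<forall>G\<in>\<Gamma>. eval I f v G \<noteq> Zero) \<longrightarrow> eval I f v D \<noteq> Zero))"
  unfolding sstt_def ss_def tt_def by auto

lemma godel_eq_One_iff: "godel x y = One \<longleftrightarrow> tv_le x y"
  by (cases x; cases y) (simp_all add: godel_def tv_le_def)

lemma godel_eq_Zero_iff: "godel x y = Zero \<longleftrightarrow> x \<noteq> Zero \<and> y = Zero"
  by (cases x; cases y) (simp_all add: godel_def tv_le_def)

text \<open>Here \<open>p\<^sub>1\<close> and \<open>p\<^sub>0\<close> stand for "all premises are \<open>1\<close>" and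
  "no premise is \<open>0\<close>" at a fixed valuation.\<close>

lemma godel_residuation:
  assumes "p\<^sub>1 \<longrightarrow> p\<^sub>0"
  shows "((p\<^sub>1 \<longrightarrow> godel x y = One) \<and> (p\<^sub>0 \<longrightarrow> godel x y \<noteq> Zero)) \<longleftrightarrow>
         ((p\<^sub>1 \<and> x = One \<longrightarrow> y = One) \<and> (p\<^sub>0 \<and> x \<noteq> Zero \<longrightarrow> y \<noteq> Zero))"
  using assms by (cases x; cases y) (auto simp: godel_def tv_le_def)

lemma deduction_rule_godel: "deduction_rule I godel"
  unfolding deduction_rule_def sstt_singleton_iff
  by (auto simp: godel_residuation)

lemma deduction_rule_unique:
  assumes "deduction_rule I f"
  shows "f = godel"
proof (intro ext tv_eqI)
  fix x y
  have deduction: "sstt I f \<Gamma> {Imp A B} \<longleftrightarrow> sstt I f (insert A \<Gamma>) {B}" for \<Gamma> A B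
    using assms unfolding deduction_rule_def by blast
  show "f x y = One \<longleftrightarrow> godel x y = One"
    using deduction[of "{}" "Const x" "Const y"]
    by (cases x; cases y) (simp_all add: sstt_singleton_iff godel_eq_One_iff tv_le_def)
  show "f x y = Zero \<longleftrightarrow> godel x y = Zero"
    using deduction[of "{Const Half}" "Const x" "Const y"]
    by (cases x; cases y) (simp_all add: sstt_singleton_iff godel_eq_Zero_iff)
qed

lemma not_premise_rule: "\<not> premise_rule I f"
proof
  assume "premise_rule I f"
  then have premise: "sstt I f (insert (Imp A B) \<Gamma>) {} \<longleftrightarrow>
      sstt I f (insert B \<Gamma>) {} \<and> sstt I f \<Gamma> {A}" for \<Gamma> A B
    unfolding premise_rule_def by blast
  have "f Half Zero \<noteq> Zero"
    using premise[of "Const Half" "Const Zero" "{}"]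
    by (simp add: sstt_empty_iff sstt_singleton_iff)
  moreover have "f Half Zero = Zero"
    using premise[of "Const Half" "Const Zero" "{Const Half}"]
    by (simp add: sstt_empty_iff sstt_singleton_iff)
  ultimately show False
    by contradiction
qed

lemma premise_rule_rtl_godel: "premise_rule_rtl I godel"
  unfolding premise_rule_rtl_def sstt_empty_iff sstt_singleton_iff
  by (auto simp: godel_eq_Zero_iff)

theorem theorem4p2:
  fixes I :: "'c \<Rightarrow> tv list \<Rightarrow> tv"
  shows "(\<exists>!f. deduction_rule I f) \<and> deduction_rule I godel
         \<and> \<not> (\<exists>f. premise_rule I f) \<and> premise_rule_rtl I godel"
  using deduction_rule_godel deduction_rule_unique not_premise_rule premise_rule_rtl_godel
  by blast

end
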